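(* Let $\mathcal{P}$ be a finite poset and let $N\in\mathrm{vec}^{\operatorname{Int}\mathcal{P}}$ be such that for all $a\le b\le c\le d$ in $\mathcal{P}\cup\{\infty\}$ the structure morphism $N(a,b)\to N(c,d)$ is zero. Then for every integer $d>0$, \[ \operatorname{Tor}_d^{\mathbb{k}(\operatorname{Int}\mathcal{P})}\big(N,\ \mathbb{k}(\operatorname{Int}\mathcal{P})/(e)\big)=0 . \]
   Context: $\mathbb{k}$ is a field. $\mathcal{P}\cup\{\infty\}$ is $\mathcal{P}$ with a new maximum $\infty$. $\operatorname{Int}\mathcal{P}=\{(a,b):a\le b,\ a,b\in\mathcal{P}\cup\{\infty\}\}$ with the product order. For a finite poset $\mathcal{Q}$, the incidence algebra $\mathbb{k}\mathcal{Q}$ has vector space basis the pairs $[x,y]$ with $x\le y$ in $\mathcal{Q}$ and multiplication $[x,y][y,z]=[x,z]$, $[x,y][z,w]=0$ if $y\ne z$. A representation $N\in\mathrm{vec}^{\mathcal{Q}}$ is a right $\mathbb{k}\mathcal{Q}$-module via $x\cdot[p,q]=N(p\le q)(x)$ for $x\in N(p)$ (and $0$ on other components). Here $e\coloneqq\sum_{c}[(c,c),(c,c)]\in\mathbb{k}(\operatorname{Int}\mathcal{P})$, the sum over the diagonal elements $(c,c)$ of $\operatorname{Int}\mathcal{P}$, and $(e)$ is the two-sided ideal it generates; $\mathbb{k}(\operatorname{Int}\mathcal{P})/(e)$ is regarded as a left $\mathbb{k}(\operatorname{Int}\mathcal{P})$-module. *)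

theory Defs
  imports Main
begin

text \<open>The incidence algebra kQ has basis the pairs [x,y] with x \<le> y (Abasis).
  A representation N in vec^Q is given in coordinates: N(q) = k^(dimN q) with
  standard basis indexed by i < dimN q, and Nmap p q is the matrix of
  N(p \<le> q) (entry Nmap p q j i = j-th coordinate of the image of the i-th
  basis vector of N(p)).  Vectors in a space with basis B are functions B \<Rightarrow> k
  (only the values on B matter).\<close>

definition Abasis :: "'q set \<Rightarrow> ('q \<Rightarrow> 'q \<Rightarrow> bool) \<Rightarrow> ('q \<times> 'q) set" where
  "Abasis Qs le = {(x, y). x \<in> Qs \<and> y \<in> Qs \<and> le x y}"

definition Nbasis :: "'q set \<Rightarrow> ('q \<Rightarrow> nat) \<Rightarrow> ('q \<times> nat) set" where
  "Nbasis Qs dimN = {(p, i). p \<in> Qs \<and> i < dimN p}"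

definition is_rep :: "'q set \<Rightarrow> ('q \<Rightarrow> 'q \<Rightarrow> bool) \<Rightarrow> ('q \<Rightarrow> nat)
    \<Rightarrow> ('q \<Rightarrow> 'q \<Rightarrow> nat \<Rightarrow> nat \<Rightarrow> 'k::field) \<Rightarrow> bool" where
  "is_rep Qs le dimN Nmap \<longleftrightarrow>
     (\<forall>p\<in>Qs. \<forall>i<dimN p. \<forall>j<dimN p. Nmap p p j i = (if i = j then 1 else 0)) \<and>
     (\<forall>p\<in>Qs. \<forall>q\<in>Qs. \<forall>r\<in>Qs. le p q \<longrightarrow> le q r \<longrightarrow>
        (\<forall>i<dimN p. \<forall>j<dimN r. Nmap p r j i = (\<Sum>l<dimN q. Nmap q r j l * Nmap p q l i)))"

text \<open>Structure constants of the incidence algebra: [x,y][z,w] = [x,w] if y = z, else 0.\<close>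
definition mulA :: "('q \<times> 'q) \<Rightarrow> ('q \<times> 'q) \<Rightarrow> ('q \<times> 'q) \<Rightarrow> 'k::field" where
  "mulA a b c = (if snd a = fst b \<and> c = (fst a, snd b) then 1 else 0)"

text \<open>Right action of basis elements of kQ on basis vectors of N:
  x \<cdot> [p,q] = N(p \<le> q)(x) for x \<in> N(p), and 0 on other components.\<close>
definition actN :: "('q \<Rightarrow> nat) \<Rightarrow> ('q \<Rightarrow> 'q \<Rightarrow> nat \<Rightarrow> nat \<Rightarrow> 'k::field)
    \<Rightarrow> ('q \<times> nat) \<Rightarrow> ('q \<times> 'q) \<Rightarrow> ('q \<times> nat) \<Rightarrow> 'k" where
  "actN dimN Nmap n a n' =
     (if fst n = fst a \<and> fst n' = snd a \<and> snd n < dimN (fst n) \<and> snd n' < dimN (fst n')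
      then Nmap (fst a) (snd a) (snd n') (snd n) else 0)"

definition basis_vec :: "'b \<Rightarrow> 'b \<Rightarrow> 'k::field" where
  "basis_vec b = (\<lambda>t. if t = b then 1 else 0)"

definition alg_mult :: "'q set \<Rightarrow> ('q \<Rightarrow> 'q \<Rightarrow> bool)
    \<Rightarrow> (('q \<times> 'q) \<Rightarrow> 'k::field) \<Rightarrow> (('q \<times> 'q) \<Rightarrow> 'k) \<Rightarrow> ('q \<times> 'q) \<Rightarrow> 'k" where
  "alg_mult Qs le x y = (\<lambda>t. \<Sum>b1\<in>Abasis Qs le. \<Sum>b2\<in>Abasis Qs le. x b1 * y b2 * mulA b1 b2 t)"

definition idem_sum :: "'q set \<Rightarrow> ('q \<times> 'q) \<Rightarrow> 'k::field" where
  "idem_sum D = (\<lambda>b. if \<exists>c\<in>D. b = (c, c) then 1 else 0)"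

definition gen_ideal :: "'q set \<Rightarrow> ('q \<Rightarrow> 'q \<Rightarrow> bool) \<Rightarrow> (('q \<times> 'q) \<Rightarrow> 'k::field)
    \<Rightarrow> (('q \<times> 'q) \<Rightarrow> 'k) set" where
  "gen_ideal Qs le E = {x. \<exists>c. \<forall>b\<in>Abasis Qs le.
      x b = (\<Sum>b1\<in>Abasis Qs le. \<Sum>b2\<in>Abasis Qs le.
               c b1 b2 * alg_mult Qs le (alg_mult Qs le (basis_vec b1) E) (basis_vec b2) b)}"

text \<open>Basis of N \<otimes>_k A^{\<otimes> d} \<otimes>_k A.  The bar complex N \<otimes>_A B(A) \<otimes>_A M
  with B_d(A) = A \<otimes> A^{\<otimes> d} \<otimes> A is N \<otimes> A^{\<otimes> d} \<otimes> M; for M = A/I it is the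
  quotient of N \<otimes> A^{\<otimes> d} \<otimes> A by the subcomplex N \<otimes> A^{\<otimes> d} \<otimes> I.\<close>
definition chain_basis :: "'q set \<Rightarrow> ('q \<Rightarrow> 'q \<Rightarrow> bool) \<Rightarrow> ('q \<Rightarrow> nat) \<Rightarrow> nat
    \<Rightarrow> (('q \<times> nat) \<times> ('q \<times> 'q) list \<times> ('q \<times> 'q)) set" where
  "chain_basis Qs le dimN d = {(n, as, a). n \<in> Nbasis Qs dimN \<and> length as = d \<and>
      set as \<subseteq> Abasis Qs le \<and> a \<in> Abasis Qs le}"

text \<open>Bar differential on a basis tensor n \<otimes> a_1 \<otimes> ... \<otimes> a_d \<otimes> a:
  (n a_1) \<otimes> a_2 ... \<otimes> a + \<Sum>_{i=1}^{d-1} (-1)^i n \<otimes> ... \<otimes> a_i a_{i+1} \<otimes> ... \<otimes> a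
  + (-1)^d n \<otimes> a_1 \<otimes> ... \<otimes> a_{d-1} \<otimes> a_d a;  bar_bd s t is the coefficient of t.\<close>
definition bar_bd :: "('q \<Rightarrow> nat) \<Rightarrow> ('q \<Rightarrow> 'q \<Rightarrow> nat \<Rightarrow> nat \<Rightarrow> 'k::field)
    \<Rightarrow> (('q \<times> nat) \<times> ('q \<times> 'q) list \<times> ('q \<times> 'q))
    \<Rightarrow> (('q \<times> nat) \<times> ('q \<times> 'q) list \<times> ('q \<times> 'q)) \<Rightarrow> 'k" where
  "bar_bd dimN Nmap s t =
     (case s of (n, as, a) \<Rightarrow> case t of (n', bs, b) \<Rightarrow>
        let d = length as in
        (if as \<noteq> [] \<and> bs = tl as \<and> b = a then actN dimN Nmap n (hd as) n' else 0)
      + (\<Sum>i\<in>{1..<d}. if n' = n \<and> b = a \<and> length bs = d - 1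
                         \<and> take (i - 1) bs = take (i - 1) as \<and> drop i bs = drop (i + 1) as
                      then (-1) ^ i * mulA (as ! (i - 1)) (as ! i) (bs ! (i - 1)) else 0)
      + (if as \<noteq> [] \<and> n' = n \<and> bs = butlast as
         then (-1) ^ d * mulA (last as) a b else 0))"

definition bar_boundary :: "'q set \<Rightarrow> ('q \<Rightarrow> 'q \<Rightarrow> bool) \<Rightarrow> ('q \<Rightarrow> nat)
    \<Rightarrow> ('q \<Rightarrow> 'q \<Rightarrow> nat \<Rightarrow> nat \<Rightarrow> 'k::field) \<Rightarrow> nat
    \<Rightarrow> ((('q \<times> nat) \<times> ('q \<times> 'q) list \<times> ('q \<times> 'q)) \<Rightarrow> 'k)
    \<Rightarrow> (('q \<times> nat) \<times> ('q \<times> 'q) list \<times> ('q \<times> 'q)) \<Rightarrow> 'k" where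
  "bar_boundary Qs le dimN Nmap d f =
     (\<lambda>t. \<Sum>s\<in>chain_basis Qs le dimN d. f s * bar_bd dimN Nmap s t)"

definition in_sub :: "'q set \<Rightarrow> ('q \<Rightarrow> 'q \<Rightarrow> bool) \<Rightarrow> ('q \<Rightarrow> nat) \<Rightarrow> nat
    \<Rightarrow> (('q \<times> 'q) \<Rightarrow> 'k::field) set
    \<Rightarrow> ((('q \<times> nat) \<times> ('q \<times> 'q) list \<times> ('q \<times> 'q)) \<Rightarrow> 'k) \<Rightarrow> bool" where
  "in_sub Qs le dimN d I v \<longleftrightarrow>
     (\<forall>n\<in>Nbasis Qs dimN. \<forall>as. length as = d \<and> set as \<subseteq> Abasis Qs le \<longrightarrow>
        (\<lambda>b. v (n, as, b)) \<in> I)"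

text \<open>Tor_d^{kQ}(N, kQ/(e)) = 0 for d \<ge> 1, i.e. the d-th homology of the bar complex
  N \<otimes> A^{\<otimes> \<bullet>} \<otimes> (A/(e)) vanishes: every d-cycle modulo N \<otimes> A^{\<otimes> d} \<otimes> (e) is a
  boundary modulo N \<otimes> A^{\<otimes> d} \<otimes> (e).\<close>
definition Tor_quot_vanishes :: "'q set \<Rightarrow> ('q \<Rightarrow> 'q \<Rightarrow> bool) \<Rightarrow> ('q \<Rightarrow> nat)
    \<Rightarrow> ('q \<Rightarrow> 'q \<Rightarrow> nat \<Rightarrow> nat \<Rightarrow> 'k::field) \<Rightarrow> (('q \<times> 'q) \<Rightarrow> 'k) \<Rightarrow> nat \<Rightarrow> bool" where
  "Tor_quot_vanishes Qs le dimN Nmap E d \<longleftrightarrow>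
     (let I = gen_ideal Qs le E in
      \<forall>v. in_sub Qs le dimN (d - 1) I (bar_boundary Qs le dimN Nmap d v) \<longrightarrow>
        (\<exists>w. in_sub Qs le dimN d I (\<lambda>t. v t - bar_boundary Qs le dimN Nmap (Suc d) w t)))"

text \<open>P \<union> {\<infinity>} is modelled as 'p option, with None = \<infinity> the new maximum.\<close>
definition ExtP :: "'p set \<Rightarrow> 'p option set" where
  "ExtP P = Some ` P \<union> {None}"

definition le_ext :: "'p::order option \<Rightarrow> 'p option \<Rightarrow> bool" where
  "le_ext a b = (case b of None \<Rightarrow> True
                  | Some y \<Rightarrow> (case a of None \<Rightarrow> False | Some x \<Rightarrow> x \<le> y))"

definition IntP :: "'p::order set \<Rightarrow> ('p option \<times> 'p option) set" where
  "IntP P = {(a, b). a \<in> ExtP P \<and> b \<in> ExtP P \<and> le_ext a b}"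

definition le_Int :: "('p::order option \<times> 'p option) \<Rightarrow> ('p option \<times> 'p option) \<Rightarrow> bool" where
  "le_Int x y \<longleftrightarrow> le_ext (fst x) (fst y) \<and> le_ext (snd x) (snd y)"

definition diagP :: "'p set \<Rightarrow> ('p option \<times> 'p option) set" where
  "diagP P = {(c, c) | c. c \<in> ExtP P}"

end

theory Submission
  imports Defs
begin

text \<open>Write A for the incidence algebra of Int P. The bar complex N \<otimes> A^(\<otimes>*) \<otimes> A is
  contractible in positive degrees, a contraction being
  n \<otimes> a_1 \<otimes> ... \<otimes> a_d \<otimes> [x,y] \<mapsto> \<plusminus> n \<otimes> a_1 \<otimes> ... \<otimes> a_d \<otimes> [x,y] \<otimes> [y,y].
  The ideal (e) is spanned by the [x,y] with x = (x1,x2) \<le> (c,c) \<le> (y1,y2) = y for some c,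
  i.e. with x2 \<le> y1. Each of them factors as [x,m] [m,y] with m = (y1,y1): the right factor
  lies in (e) again, and N kills the left factor because of the hypothesis on N. Using this
  factorisation in place of [x,y] \<otimes> [y,y] gives a second homotopy s', which maps the subcomplex
  N \<otimes> A^(\<otimes>*) \<otimes> (e) into itself and satisfies \<partial>s' + s'\<partial> = id there. So if \<partial>v lies in the
  subcomplex, then z = s'(\<partial>v) lies in it with \<partial>z = \<partial>v, and v - z = \<partial>(s(v - z)): every relative
  cycle is a relative boundary, which is the vanishing of Tor_d(N, A/(e)).\<close>

lemma sum_eq_single:
  fixes f :: "'a \<Rightarrow> 'b::comm_monoid_add"
  assumes "finite S" and "\<And>x. x \<in> S \<Longrightarrow> x \<noteq> a \<Longrightarrow> f x = 0"
  shows "sum f S = (if a \<in> S then f a else 0)"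
proof -
  have "sum f S = (\<Sum>x\<in>S. if x = a then f x else 0)"
    using assms(2) by (intro sum.cong) auto
  with assms(1) show ?thesis by (simp add: sum.delta')
qed

lemma sum_reindex_support:
  fixes f :: "'a \<Rightarrow> 'b::comm_monoid_add"
  assumes "finite T" "inj_on g S" "g ` S \<subseteq> T" "\<And>t. t \<in> T \<Longrightarrow> t \<notin> g ` S \<Longrightarrow> f t = 0"
  shows "sum f T = (\<Sum>s\<in>S. f (g s))"
proof -
  have "sum f T = sum f (g ` S)"
    using assms by (intro sum.mono_neutral_right) auto
  with assms(2) show ?thesis by (simp add: sum.reindex)
qed

lemma finite_Abasis: "finite Qs \<Longrightarrow> finite (Abasis Qs le)"
  by (rule finite_subset[of _ "Qs \<times> Qs"]) (auto simp: Abasis_def)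

lemma alg_mult_basis_vec_left:
  assumes "finite Qs" "b \<in> Abasis Qs le"
  shows "alg_mult Qs le (basis_vec b) y t = (\<Sum>b'\<in>Abasis Qs le. y b' * mulA b b' t)"
proof -
  have "(\<Sum>b2\<in>Abasis Qs le. if b1 = b then y b2 * mulA b b2 t else 0) =
      (if b1 = b then \<Sum>b2\<in>Abasis Qs le. y b2 * mulA b b2 t else 0)" for b1
    by simp
  with assms show ?thesis
    by (simp add: alg_mult_def basis_vec_def finite_Abasis if_distrib[of "\<lambda>x. x * _"] sum.delta'
        cong: if_cong)
qed

lemma alg_mult_basis_vec_right:
  assumes "finite Qs" "b \<in> Abasis Qs le"
  shows "alg_mult Qs le x (basis_vec b) t = (\<Sum>b'\<in>Abasis Qs le. x b' * mulA b' b t)"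
  using assms
  by (simp add: alg_mult_def basis_vec_def finite_Abasis if_distrib[of "\<lambda>x. _ * x"]
      if_distrib[of "\<lambda>x. x * _"] sum.delta' cong: if_cong)

section \<open>The bar complex\<close>

definition face_coeff :: "('q \<times> 'q) list \<Rightarrow> ('q \<times> 'q) list \<Rightarrow> nat \<Rightarrow> 'k::field" where
  "face_coeff as bs i =
     (if take (i - 1) bs = take (i - 1) as \<and> drop i bs = drop (i + 1) as
      then (-1) ^ i * mulA (as ! (i - 1)) (as ! i) (bs ! (i - 1)) else 0)"

lemma face_coeff_snoc:
  assumes "0 < i" "i < length as" "length bs = length as - 1"
  shows "face_coeff (as @ [a]) (bs @ [x]) i = (if x = a then face_coeff as bs i else 0)"
  using assms by (auto simp: face_coeff_def nth_append)

lemma face_coeff_snoc_last: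
  assumes "as \<noteq> []" "length bs = length as - 1"
  shows "face_coeff (as @ [a]) (bs @ [x]) (length as) =
    (if bs = butlast as then (-1) ^ length as * mulA (last as) a x else 0)"
proof -
  obtain as' a' where "as = as' @ [a']" using assms(1) by (cases as rule: rev_cases) auto
  with assms(2) show ?thesis by (auto simp: face_coeff_def nth_append)
qed

locale bar_complex =
  fixes Qs :: "'q set" and le :: "'q \<Rightarrow> 'q \<Rightarrow> bool" and dimN :: "'q \<Rightarrow> nat"
    and Nmap :: "'q \<Rightarrow> 'q \<Rightarrow> nat \<Rightarrow> nat \<Rightarrow> 'k::field"
  assumes finite_Qs: "finite Qs"
    and le_refl_Qs: "\<And>x. x \<in> Qs \<Longrightarrow> le x x"
    and le_trans_Qs: "\<And>x y z. x \<in> Qs \<Longrightarrow> y \<in> Qs \<Longrightarrow> z \<in> Qs \<Longrightarrow> le x y \<Longrightarrow> le y z \<Longrightarrow> le x z"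
    and rep: "is_rep Qs le dimN Nmap"
begin

abbreviation "AB \<equiv> Abasis Qs le"
abbreviation "NB \<equiv> Nbasis Qs dimN"
abbreviation "CB \<equiv> chain_basis Qs le dimN"
abbreviation "bd \<equiv> bar_bd dimN Nmap"
abbreviation "Bd \<equiv> bar_boundary Qs le dimN Nmap"
abbreviation "act \<equiv> actN dimN Nmap"

lemma bar_bd_Nil: "bd (n, [], a) t = 0"
  by (cases t) (simp add: bar_bd_def)

lemma bar_bd_eq_face_coeff:
  "bd (n, as, a) (n', bs, b) =
     (if as \<noteq> [] \<and> bs = tl as \<and> b = a then act n (hd as) n' else 0)
   + (if n' = n \<and> b = a \<and> length bs = length as - 1
      then \<Sum>i\<in>{1..<length as}. face_coeff as bs i else 0)
   + (if as \<noteq> [] \<and> n' = n \<and> bs = butlast as then (-1) ^ length as * mulA (last as) a b else 0)"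
  by (cases "n' = n \<and> b = a \<and> length bs = length as - 1")
    (auto simp: bar_bd_def face_coeff_def Let_def intro!: sum.neutral)

lemma bar_bd_snoc:
  assumes len: "length bs = length as"
  shows "bd (n, as @ [a], b) (n', bs, c) =
    (if bs \<noteq> [] \<and> c = b then bd (n, as, a) (n', butlast bs, last bs) else 0)
    + (if n' = n \<and> bs = as then (-1) ^ (length as + 1) * mulA a b c else 0)
    + (if as = [] \<and> c = b then act n a n' else 0)"
proof (cases "as = []")
  case True
  with len show ?thesis by (simp add: bar_bd_def)
next
  case False
  then obtain bs' x where bs: "bs = bs' @ [x]"
    using len by (metis append_butlast_last_id length_0_conv)
  with len have len': "length bs' = length as - 1" by simp
  have "(\<Sum>i\<in>{1..<length as}. face_coeff (as @ [a]) bs i) =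
      (\<Sum>i\<in>{1..<length as}. if x = a then face_coeff as bs' i else 0)"
    using len' by (intro sum.cong) (simp_all add: bs face_coeff_snoc)
  also have "\<dots> = (if x = a then \<Sum>i\<in>{1..<length as}. face_coeff as bs' i else 0)"
    by simp
  finally have "(\<Sum>i\<in>{1..<length as}. face_coeff (as @ [a]) bs i) =
      (if x = a then \<Sum>i\<in>{1..<length as}. face_coeff as bs' i else 0)" .
  moreover have "{1..<length (as @ [a])} = insert (length as) {1..<length as}"
    using False by (auto simp: Suc_le_eq)
  ultimately have faces: "(\<Sum>i\<in>{1..<length (as @ [a])}. face_coeff (as @ [a]) bs i) =
      (if bs' = butlast as then (-1) ^ length as * mulA (last as) a x else 0)
    + (if x = a then \<Sum>i\<in>{1..<length as}. face_coeff as bs' i else 0)"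
    using False len' by (simp add: bs face_coeff_snoc_last)
  show ?thesis
    using False len' unfolding bar_bd_eq_face_coeff[of n "as @ [a]"] faces
    by (cases "c = b"; cases "n' = n") (simp_all add: bar_bd_eq_face_coeff bs)
qed

lemma bar_bd_nonzero_snd:
  assumes "bd (n, as, a) (n', bs, c) \<noteq> 0"
  shows "snd c = snd a"
proof (rule ccontr)
  assume "snd c \<noteq> snd a"
  then have "c \<noteq> a" and "mulA (last as) a c = (0::'k)" by (auto simp: mulA_def)
  then have "bd (n, as, a) (n', bs, c) = 0" by (simp add: bar_bd_def Let_def)
  with assms show False by simp
qed

lemma bar_bd_snd_eq:
  "bd (n, as, (x, m)) (n', bs, (x', m')) =
     (if m' = m then bd (n, as, (x, y)) (n', bs, (x', y)) else 0)"
proof (cases "m' = m")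
  case True
  then show ?thesis by (simp add: bar_bd_def Let_def mulA_def)
next
  case False
  then show ?thesis using bar_bd_nonzero_snd[of n as "(x, m)" n' bs "(x', m')"] by auto
qed

lemma finite_Nbasis: "finite NB"
proof -
  have "NB \<subseteq> Qs \<times> {..<Max (dimN ` Qs)}"
    using finite_Qs by (auto simp: Nbasis_def) (meson Max_ge finite_imageI image_eqI order_less_le_trans)
  with finite_Qs show ?thesis by (meson finite_SigmaI finite_lessThan finite_subset)
qed

lemma finite_chain_basis: "finite (CB d)"
proof -
  have "CB d \<subseteq> NB \<times> {as. set as \<subseteq> AB \<and> length as = d} \<times> AB"
    by (auto simp: chain_basis_def)
  moreover have "finite {as. set as \<subseteq> AB \<and> length as = d}"
    using finite_Abasis[OF finite_Qs] by (rule finite_lists_length_eq)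
  ultimately show ?thesis
    using finite_Nbasis finite_Abasis[OF finite_Qs] by (meson finite_SigmaI finite_subset)
qed

lemma mem_chain_basis:
  "(n, as, a) \<in> CB d \<longleftrightarrow> n \<in> NB \<and> length as = d \<and> set as \<subseteq> AB \<and> a \<in> AB"
  by (simp add: chain_basis_def)

lemma mem_chain_basis_butlast:
  assumes "(n, as, a) \<in> CB (Suc d)"
  shows "(n, butlast as, last as) \<in> CB d"
proof -
  have "as \<noteq> []" using assms by (auto simp: mem_chain_basis)
  then have "last as \<in> set as" by simp
  with assms show ?thesis by (auto simp: mem_chain_basis dest: in_set_butlastD)
qed

lemma bar_boundary_0: "Bd 0 f t = 0"
  unfolding bar_boundary_def chain_basis_def by (rule sum.neutral) (auto simp: bar_bd_Nil)

lemma bar_boundary_diff: "Bd d (\<lambda>t. f t - g t) u = Bd d f u - Bd d g u"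
  by (simp add: bar_boundary_def sum_subtractf left_diff_distrib)

lemma Abasis_comp:
  "a \<in> AB \<Longrightarrow> b \<in> AB \<Longrightarrow> snd a = fst b \<Longrightarrow> (fst a, snd b) \<in> AB"
  using le_trans_Qs[of "fst a" "snd a" "snd b"] by (auto simp: Abasis_def)

lemma Abasis_snd_diag: "a \<in> AB \<Longrightarrow> (snd a, snd a) \<in> AB"
  by (auto simp: Abasis_def le_refl_Qs)

lemma bar_bd_target_Abasis:
  assumes s: "(n, as, a) \<in> CB d" and nz: "bd (n, as, a) (n', bs, c) \<noteq> 0"
  shows "c \<in> AB"
proof (rule ccontr)
  assume c: "c \<notin> AB"
  have a: "a \<in> AB" using s by (simp add: mem_chain_basis)
  have "mulA (last as) a c = (0::'k)" if "as \<noteq> []"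
  proof -
    have "last as \<in> AB" using s that by (auto simp: mem_chain_basis)
    with a c Abasis_comp[of "last as" a] show ?thesis by (auto simp: mulA_def)
  qed
  moreover have "c \<noteq> a" using a c by auto
  ultimately have "bd (n, as, a) (n', bs, c) = 0"
    by (simp add: bar_bd_def Let_def)
  with nz show False by simp
qed

lemma Nmap_comp:
  assumes "p \<in> Qs" "q \<in> Qs" "r \<in> Qs" "le p q" "le q r" "i < dimN p" "j < dimN r"
  shows "Nmap p r j i = (\<Sum>l<dimN q. Nmap q r j l * Nmap p q l i)"
  using rep assms unfolding is_rep_def by blast

lemma sum_act_act:
  assumes a1: "a1 \<in> AB" and a: "a \<in> AB"
  shows "(\<Sum>m\<in>NB. act n a1 m * act m a n') =
    (if snd a1 = fst a then act n (fst a1, snd a) n' else 0)"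
proof (cases "snd a1 = fst a")
  case False
  then have "act n a1 m * act m a n' = 0" for m
    by (auto simp: actN_def)
  with False show ?thesis by (auto intro!: sum.neutral)
next
  case True
  define q where "q = snd a1"
  define G where "G = (fst n = fst a1 \<and> fst n' = snd a \<and> snd n < dimN (fst n) \<and> snd n' < dimN (fst n'))"
  have "(\<Sum>m\<in>NB. act n a1 m * act m a n') = (\<Sum>l<dimN q. act n a1 (q, l) * act (q, l) a n')"
  proof (rule sum_reindex_support[OF finite_Nbasis])
    show "(\<lambda>l. (q, l)) ` {..<dimN q} \<subseteq> NB"
      using a1 by (auto simp: Nbasis_def Abasis_def q_def)
    show "inj_on (\<lambda>l. (q, l)) {..<dimN q}" by (auto simp: inj_on_def)
    fix t assume "t \<in> NB" "t \<notin> (\<lambda>l. (q, l)) ` {..<dimN q}"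
    then show "act n a1 t * act t a n' = 0"
      by (cases t) (auto simp: actN_def q_def)
  qed
  also have "\<dots> = (\<Sum>l<dimN q. if G then Nmap q (snd a) (snd n') l * Nmap (fst a1) q l (snd n) else 0)"
    using True unfolding G_def actN_def q_def by (intro sum.cong) (auto simp: mult.commute)
  also have "\<dots> = (if G then Nmap (fst a1) (snd a) (snd n') (snd n) else 0)"
  proof (cases G)
    case G: True
    have "fst a1 \<in> Qs" "q \<in> Qs" "snd a \<in> Qs" "le (fst a1) q" "le q (snd a)"
      using a1 a True by (auto simp: Abasis_def q_def)
    moreover have "snd n < dimN (fst a1)" "snd n' < dimN (snd a)" using G by (auto simp: G_def)
    ultimately show ?thesis
      using G Nmap_comp[of "fst a1" q "snd a" "snd n" "snd n'"] by simp
  qed simp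
  also have "\<dots> = (if snd a1 = fst a then act n (fst a1, snd a) n' else 0)"
    using True unfolding actN_def G_def by (cases n; cases n') auto
  finally show ?thesis .
qed

section \<open>The square of the bar differential\<close>

lemma chain_basis_0: "CB 0 = NB \<times> {[]} \<times> AB"
  by (auto simp: chain_basis_def)

text \<open>The boundary of a 1-chain vanishes under the augmentation N \<otimes> A \<rightarrow> N; this is
  associativity of the action.\<close>

lemma sum_bar_bd_augmentation:
  assumes s: "(n, as, a) \<in> CB (Suc d)"
  shows "(\<Sum>(m, es, e)\<in>CB d. bd (n, as, a) (m, es, e) * (if es = [] then act m e n' else 0)) = 0"
proof (cases d)
  case Suc
  then show ?thesis by (intro sum.neutral) (auto simp: chain_basis_def)
next
  case 0
  with s obtain a1 where as: "as = [a1]" and a1: "a1 \<in> AB" and a: "a \<in> AB" and n: "n \<in> NB"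
    by (cases as) (auto simp: mem_chain_basis)
  have "(fst a1, snd a) \<in> AB" if "snd a1 = fst a"
    using Abasis_comp[OF a1 a that] .
  then have sum_mulA: "(\<Sum>e\<in>AB. mulA a1 a e * act n e n') =
      (if snd a1 = fst a then act n (fst a1, snd a) n' else 0)"
    by (simp add: mulA_def if_distrib[of "\<lambda>x. x * _"] sum.delta' finite_Abasis[OF finite_Qs] cong: if_cong)
  have "bd (n, [a1], a) (m, [], e) = (if e = a then act n a1 m else 0) - (if m = n then mulA a1 a e else 0)"
    for m e
    using bar_bd_snoc[of "[]" "[]" n a1 a m e] by simp
  moreover have "(\<Sum>m\<in>NB. \<Sum>e\<in>AB. if m = n then f e else 0) = sum f AB" for f :: "_ \<Rightarrow> 'k"
    by (subst sum.swap) (simp add: sum.delta' finite_Nbasis n)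
  ultimately have "(\<Sum>(m, es, e)\<in>CB 0. bd (n, as, a) (m, es, e) * (if es = [] then act m e n' else 0)) =
      (\<Sum>m\<in>NB. act n a1 m * act m a n') - (\<Sum>e\<in>AB. mulA a1 a e * act n e n')"
    by (simp add: as chain_basis_0 sum.cartesian_product[symmetric] left_diff_distrib sum_subtractf
        if_distrib[of "\<lambda>x. x * _"] sum.delta' finite_Nbasis finite_Abasis[OF finite_Qs] n a
        cong: if_cong)
  with 0 show ?thesis by (simp add: sum_act_act[OF a1 a] sum_mulA)
qed

lemma sum_bar_bd_mulA:
  assumes s: "(n, as, a) \<in> CB (Suc d)" and u: "(nu, bsu, cu) \<in> CB d"
  shows "(\<Sum>(m, es, e)\<in>CB d. bd (n, as, a) (m, es, e) * (if m = nu \<and> es = bsu then mulA e b cu else 0)) =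
    (if snd a = fst b then bd (n, as, (fst a, snd b)) (nu, bsu, cu) else 0)"
proof -
  obtain x y where a: "a = (x, y)" by fastforce
  obtain y' z where b: "b = (y', z)" by fastforce
  obtain x' z' where cu: "cu = (x', z')" by fastforce
  define t0 where "t0 = (nu, bsu, (x', y))"
  have "(\<Sum>(m, es, e)\<in>CB d. bd (n, as, a) (m, es, e) * (if m = nu \<and> es = bsu then mulA e b cu else 0)) =
      (if t0 \<in> CB d then bd (n, as, a) t0 * mulA (x', y) b cu else 0)"
  proof (subst sum_eq_single[OF finite_chain_basis, of _ t0])
    fix t assume "t \<in> CB d" "t \<noteq> t0"
    then show "(case t of (m, es, e) \<Rightarrow> bd (n, as, a) (m, es, e) * (if m = nu \<and> es = bsu then mulA e b cu else 0)) = 0"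
      using bar_bd_nonzero_snd[of n as a] by (cases t rule: prod_cases3) (auto simp: t0_def a cu mulA_def)
  qed (simp add: t0_def)
  also have "\<dots> = (if snd a = fst b then bd (n, as, (fst a, snd b)) (nu, bsu, cu) else 0)"
  proof (cases "t0 \<in> CB d")
    case True
    then show ?thesis
      by (simp add: t0_def a b cu mulA_def bar_bd_snd_eq[of n as x z nu bsu x' z' y])
  next
    case False
    have "(x', y) \<notin> AB" using False u by (simp add: t0_def mem_chain_basis)
    then have "bd (n, as, a) t0 = 0"
      using bar_bd_target_Abasis[OF s, of nu bsu "(x', y)"] by (auto simp: t0_def)
    with False show ?thesis
      by (auto simp: t0_def a b cu bar_bd_snd_eq[of n as x z nu bsu x' z' y])
  qed
  finally show ?thesis .
qed

lemma sum_chain_basis_Suc: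
  assumes b: "b \<in> AB"
  shows "(\<Sum>(m, es, e)\<in>CB (Suc d). if e = b then h m es e else 0) =
    (\<Sum>(m, es, e)\<in>CB d. h m (es @ [e]) b)"
proof (subst sum_reindex_support[OF finite_chain_basis, of "\<lambda>(m, es, e). (m, es @ [e], b)" "CB d"])
  show "inj_on (\<lambda>(m, es, e). (m, es @ [e], b)) (CB d)" by (auto simp: inj_on_def)
  show "(\<lambda>(m, es, e). (m, es @ [e], b)) ` CB d \<subseteq> CB (Suc d)" using b by (auto simp: chain_basis_def)
next
  fix t assume t: "t \<in> CB (Suc d)" "t \<notin> (\<lambda>(m, es, e). (m, es @ [e], b)) ` CB d"
  obtain m es e where te: "t = (m, es, e)" by (cases t)
  have "es \<noteq> []" using t by (auto simp: te mem_chain_basis)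
  then have "t \<in> (\<lambda>(m, es, e). (m, es @ [e], b)) ` CB d" if "e = b"
    using that t(1) mem_chain_basis_butlast[of m es e d]
    by (intro image_eqI[where x = "(m, butlast es, last es)"]) (auto simp: te)
  with t(2) show "(case t of (m, es, e) \<Rightarrow> if e = b then h m es e else 0) = 0"
    by (auto simp: te)
qed (simp add: split_def)

lemma sum_bar_bd_snoc:
  assumes s: "(n, as @ [a], b) \<in> CB (Suc (Suc d))"
  shows "(\<Sum>t\<in>CB (Suc d). bd (n, as @ [a], b) t * g t) =
    (\<Sum>(m, es, e)\<in>CB d. bd (n, as, a) (m, es, e) * g (m, es @ [e], b))
    + (if snd a = fst b then (-1) ^ d * g (n, as, (fst a, snd b)) else 0)"
proof -
  have as: "length as = Suc d" and a: "a \<in> AB" and b: "b \<in> AB" and s': "(n, as, a) \<in> CB (Suc d)"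
    using s by (auto simp: mem_chain_basis)
  have split_term: "bd (n, as @ [a], b) (m, es, e) * g (m, es, e) =
      (if e = b then bd (n, as, a) (m, butlast es, last es) * g (m, es, e) else 0)
    + (if m = n \<and> es = as then (-1) ^ d * mulA a b e * g (m, es, e) else 0)"
    if "(m, es, e) \<in> CB (Suc d)" for m es e
    using that as bar_bd_snoc[of es as n a b m e] by (auto simp: mem_chain_basis algebra_simps)
  have "(\<Sum>t\<in>CB (Suc d). bd (n, as @ [a], b) t * g t) =
      (\<Sum>(m, es, e)\<in>CB (Suc d). if e = b then bd (n, as, a) (m, butlast es, last es) * g (m, es, e) else 0)
    + (\<Sum>(m, es, e)\<in>CB (Suc d). if m = n \<and> es = as then (-1) ^ d * mulA a b e * g (m, es, e) else 0)"
    unfolding sum.distrib[symmetric]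
  proof (intro sum.cong refl)
    fix t assume "t \<in> CB (Suc d)"
    then show "bd (n, as @ [a], b) t * g t = (case t of (m, es, e) \<Rightarrow>
        if e = b then bd (n, as, a) (m, butlast es, last es) * g (m, es, e) else 0)
      + (case t of (m, es, e) \<Rightarrow> if m = n \<and> es = as then (-1) ^ d * mulA a b e * g (m, es, e) else 0)"
      using split_term by (cases t rule: prod_cases3) simp
  qed
  also have "(\<Sum>(m, es, e)\<in>CB (Suc d). if m = n \<and> es = as then (-1) ^ d * mulA a b e * g (m, es, e) else 0) =
      (if snd a = fst b then (-1) ^ d * g (n, as, (fst a, snd b)) else 0)"
  proof -
    have "(n, as, (fst a, snd b)) \<in> CB (Suc d)" if "snd a = fst b"
      using s' Abasis_comp[OF a b that] by (simp add: mem_chain_basis)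
    then show ?thesis
      by (subst sum_eq_single[OF finite_chain_basis, of _ "(n, as, (fst a, snd b))"])
        (auto simp: mulA_def split: if_splits)
  qed
  finally show ?thesis by (simp add: sum_chain_basis_Suc[OF b])
qed

lemma sum_bar_bd_mult_bar_bd_snoc:
  assumes s: "(n, as, a) \<in> CB (Suc d)" and u: "(nu, bsu, cu) \<in> CB d"
  shows "(\<Sum>(m, es, e)\<in>CB d. bd (n, as, a) (m, es, e) * bd (m, es @ [e], b) (nu, bsu, cu)) =
      (if bsu \<noteq> [] \<and> cu = b then \<Sum>t\<in>CB d. bd (n, as, a) t * bd t (nu, butlast bsu, last bsu) else 0)
    - (-1) ^ d * (if snd a = fst b then bd (n, as, (fst a, snd b)) (nu, bsu, cu) else 0)"
proof -
  let ?inner = "\<lambda>m es e. if bsu \<noteq> [] \<and> cu = b then bd (m, es, e) (nu, butlast bsu, last bsu) else 0"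
  let ?mulA = "\<lambda>m es e. if m = nu \<and> es = bsu then mulA e b cu else 0"
  let ?act = "\<lambda>m es e. if es = [] \<and> cu = b then act m e nu else 0"
  let ?R = "\<lambda>m es e. bd (n, as, a) (m, es, e) * ?inner m es e
    - (-1) ^ d * (bd (n, as, a) (m, es, e) * ?mulA m es e) + bd (n, as, a) (m, es, e) * ?act m es e"
  have expand: "bd (m, es @ [e], b) (nu, bsu, cu) = ?inner m es e - (-1) ^ d * ?mulA m es e + ?act m es e"
    if "(m, es, e) \<in> CB d" for m es e
    using that u bar_bd_snoc[of bsu es m e b nu cu] by (auto simp: mem_chain_basis)
  have "(\<Sum>(m, es, e)\<in>CB d. bd (n, as, a) (m, es, e) * bd (m, es @ [e], b) (nu, bsu, cu)) =
      (\<Sum>(m, es, e)\<in>CB d. ?R m es e)"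
  proof (intro sum.cong refl)
    fix t assume "t \<in> CB d"
    then show "(case t of (m, es, e) \<Rightarrow> bd (n, as, a) (m, es, e) * bd (m, es @ [e], b) (nu, bsu, cu)) =
        (case t of (m, es, e) \<Rightarrow> ?R m es e)"
      by (cases t rule: prod_cases3) (simp add: expand algebra_simps)
  qed
  moreover have "(\<Sum>(m, es, e)\<in>CB d. ?R m es e) =
      (\<Sum>(m, es, e)\<in>CB d. bd (n, as, a) (m, es, e) * ?inner m es e)
    - (-1) ^ d * (\<Sum>(m, es, e)\<in>CB d. bd (n, as, a) (m, es, e) * ?mulA m es e)
    + (\<Sum>(m, es, e)\<in>CB d. bd (n, as, a) (m, es, e) * ?act m es e)"
    by (simp add: split_def sum.distrib sum_subtractf sum_distrib_left)
  moreover have "(\<Sum>(m, es, e)\<in>CB d. bd (n, as, a) (m, es, e) * ?inner m es e) =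
      (if bsu \<noteq> [] \<and> cu = b then \<Sum>t\<in>CB d. bd (n, as, a) t * bd t (nu, butlast bsu, last bsu) else 0)"
    by (cases "bsu \<noteq> [] \<and> cu = b") (auto simp: split_def intro!: sum.neutral)
  moreover have "(\<Sum>(m, es, e)\<in>CB d. bd (n, as, a) (m, es, e) * ?act m es e) = 0"
    using sum_bar_bd_augmentation[OF s, of nu] by (cases "cu = b") simp_all
  ultimately show ?thesis
    using sum_bar_bd_mulA[OF s u] by simp
qed

lemma bar_bd_bar_bd:
  "s \<in> CB (Suc (Suc d)) \<Longrightarrow> u \<in> CB d \<Longrightarrow> (\<Sum>t\<in>CB (Suc d). bd s t * bd t u) = 0"
proof (induction d arbitrary: s u rule: less_induct)
  case (less d)
  obtain n es b where s_es: "s = (n, es, b)" by (cases s rule: prod_cases3)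
  moreover have "es \<noteq> []" using less.prems(1) by (auto simp: s_es mem_chain_basis)
  ultimately obtain as a where s: "s = (n, as @ [a], b)" by (metis append_butlast_last_id)
  obtain nu bsu cu where u: "u = (nu, bsu, cu)" by (cases u rule: prod_cases3)
  have s': "(n, as, a) \<in> CB (Suc d)" and u': "(nu, bsu, cu) \<in> CB d"
    using less.prems by (auto simp: s u mem_chain_basis)
  have "(\<Sum>t\<in>CB d. bd (n, as, a) t * bd t (nu, butlast bsu, last bsu)) = 0" if "bsu \<noteq> []"
  proof -
    obtain d' where d: "d = Suc d'" using u' \<open>bsu \<noteq> []\<close> by (cases d) (auto simp: mem_chain_basis)
    have "(nu, butlast bsu, last bsu) \<in> CB d'"
      using u' mem_chain_basis_butlast by (simp add: d)
    with s' show ?thesis using less.IH[of d'] by (simp add: d)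
  qed
  then show ?case
    using less.prems(1) sum_bar_bd_mult_bar_bd_snoc[OF s' u', of b]
    by (simp add: s u sum_bar_bd_snoc split_def)
qed

lemma bar_boundary_bar_boundary:
  assumes "u \<in> CB d"
  shows "Bd (Suc d) (Bd (Suc (Suc d)) v) u = 0"
proof -
  have "Bd (Suc d) (Bd (Suc (Suc d)) v) u =
      (\<Sum>s\<in>CB (Suc (Suc d)). v s * (\<Sum>t\<in>CB (Suc d). bd s t * bd t u))"
    by (simp add: bar_boundary_def sum_distrib_left sum_distrib_right mult.assoc sum.swap[of _ "CB (Suc d)"])
  with assms show ?thesis by (simp add: bar_bd_bar_bd)
qed

end

section \<open>Homotopies on the bar complex\<close>

type_synonym 'q bar_tensor = "('q \<times> nat) \<times> ('q \<times> 'q) list \<times> ('q \<times> 'q)"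

definition split_last_factor :: "('q \<Rightarrow> 'q) \<Rightarrow> 'q bar_tensor \<Rightarrow> 'q bar_tensor" where
  "split_last_factor mid = (\<lambda>(n, as, (x, y)). (n, as @ [(x, mid y)], (mid y, y)))"

text \<open>The coefficient form of the map
  n \<otimes> a_1 \<otimes> ... \<otimes> a_d \<otimes> [x,y] \<mapsto> (-1)^(d+1) n \<otimes> a_1 \<otimes> ... \<otimes> a_d \<otimes> [x, mid y] \<otimes> [mid y, y],
  i.e. of split_last_factor with a sign. For mid = id it is the standard contracting homotopy
  of the bar resolution.\<close>

definition homotopy :: "('q \<Rightarrow> 'q) \<Rightarrow> ('q bar_tensor \<Rightarrow> 'k::field) \<Rightarrow> 'q bar_tensor \<Rightarrow> 'k" where
  "homotopy mid v = (\<lambda>(n, bs, c).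
     if bs \<noteq> [] \<and> snd (last bs) = fst c \<and> fst c = mid (snd c)
     then (-1) ^ length bs * v (n, butlast bs, (fst (last bs), snd c)) else 0)"

lemma homotopy_split_last_factor:
  "homotopy mid v (split_last_factor mid (n, as, a)) = (-1) ^ Suc (length as) * v (n, as, a)"
  by (cases a) (simp add: homotopy_def split_last_factor_def)

lemma homotopy_nonzero:
  assumes "homotopy mid v (n, bs, c) \<noteq> 0"
  shows "bs \<noteq> []" and "split_last_factor mid (n, butlast bs, (fst (last bs), snd c)) = (n, bs, c)"
proof -
  from assms show "bs \<noteq> []" by (auto simp: homotopy_def)
  from assms have C: "snd (last bs) = fst c" "fst c = mid (snd c)"
    by (auto simp: homotopy_def split: if_splits)
  with \<open>bs \<noteq> []\<close> have "butlast bs @ [(fst (last bs), mid (snd c))] = bs"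
    by (metis append_butlast_last_id prod.collapse)
  moreover have "(mid (snd c), snd c) = c" using C by (metis prod.collapse)
  ultimately show "split_last_factor mid (n, butlast bs, (fst (last bs), snd c)) = (n, bs, c)"
    by (simp add: split_last_factor_def)
qed

context bar_complex
begin

lemma mem_chain_basis_contract:
  assumes t: "(n, bs, c) \<in> CB (Suc e)" and "snd (last bs) = fst c"
  shows "(n, butlast bs, (fst (last bs), snd c)) \<in> CB e"
proof -
  have "bs \<noteq> []" using t by (auto simp: mem_chain_basis)
  then have "last bs \<in> AB" and "c \<in> AB" using t by (auto simp: mem_chain_basis)
  with assms(2) have "(fst (last bs), snd c) \<in> AB" using Abasis_comp by blast
  with t show ?thesis by (auto simp: mem_chain_basis dest: in_set_butlastD)
qed

lemma homotopy_eq_0: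
  assumes u: "u \<in> CB e" and f: "\<And>t. t \<in> CB (e - 1) \<Longrightarrow> f t = 0"
  shows "homotopy mid f u = 0"
proof -
  obtain n bs c where u_eq: "u = (n, bs, c)" by (cases u rule: prod_cases3)
  show ?thesis
  proof (cases e)
    case 0
    with u show ?thesis by (auto simp: u_eq homotopy_def mem_chain_basis)
  next
    case Suc
    show ?thesis
    proof (rule ccontr)
      assume nz: "homotopy mid f u \<noteq> 0"
      then have "snd (last bs) = fst c" by (auto simp: u_eq homotopy_def split: if_splits)
      with u Suc have "(n, butlast bs, (fst (last bs), snd c)) \<in> CB (e - 1)"
        by (simp add: u_eq mem_chain_basis_contract)
      then have "f (n, butlast bs, (fst (last bs), snd c)) = 0" by (rule f)
      with nz show False by (auto simp: u_eq homotopy_def split: if_splits)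
    qed
  qed
qed

lemma homotopy_eq_0_not_good:
  assumes u: "u \<in> CB e" and right_factor: "\<And>y. (mid y, y) \<in> AB \<Longrightarrow> good (mid y, y)"
    and bad: "\<not> good (snd (snd u))"
  shows "homotopy mid f u = 0"
proof (rule ccontr)
  obtain n bs c where u_eq: "u = (n, bs, c)" by (cases u rule: prod_cases3)
  assume "homotopy mid f u \<noteq> 0"
  then have "fst c = mid (snd c)" by (auto simp: homotopy_def u_eq split: if_splits)
  then have "c = (mid (snd c), snd c)" by (simp add: prod_eq_iff)
  moreover have "c \<in> AB" using u by (simp add: u_eq mem_chain_basis)
  ultimately have "good c" using right_factor by metis
  with bad show False by (simp add: u_eq)
qed

lemma sum_homotopy:
  assumes factor: "\<And>a. a \<in> AB \<Longrightarrow> good a \<Longrightarrow> (fst a, mid (snd a)) \<in> AB \<and> (mid (snd a), snd a) \<in> AB"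
    and v: "\<And>s. s \<in> CB e \<Longrightarrow> \<not> good (snd (snd s)) \<Longrightarrow> v s = 0"
  shows "(\<Sum>t\<in>CB (Suc e). homotopy mid v t * g t) =
    (\<Sum>s\<in>CB e. (-1) ^ Suc e * v s * g (split_last_factor mid s))"
proof -
  define S where "S = {s \<in> CB e. good (snd (snd s))}"
  have "(\<Sum>t\<in>CB (Suc e). homotopy mid v t * g t) =
      (\<Sum>s\<in>S. homotopy mid v (split_last_factor mid s) * g (split_last_factor mid s))"
  proof (rule sum_reindex_support[OF finite_chain_basis])
    show "inj_on (split_last_factor mid) S"
      by (auto simp: inj_on_def split_last_factor_def split: prod.splits)
    show "split_last_factor mid ` S \<subseteq> CB (Suc e)"
      using factor by (auto simp: S_def mem_chain_basis split_last_factor_def)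
  next
    fix t assume t: "t \<in> CB (Suc e)" "t \<notin> split_last_factor mid ` S"
    obtain n bs c where t_eq: "t = (n, bs, c)" by (cases t rule: prod_cases3)
    define s where "s = (n, butlast bs, (fst (last bs), snd c))"
    show "homotopy mid v t * g t = 0"
    proof (rule ccontr)
      assume "homotopy mid v t * g t \<noteq> 0"
      then have nz: "homotopy mid v t \<noteq> 0" by simp
      then have "split_last_factor mid s = t" using homotopy_nonzero by (simp add: t_eq s_def)
      moreover have "s \<in> CB e"
        using nz t(1) mem_chain_basis_contract by (auto simp: t_eq s_def homotopy_def split: if_splits)
      moreover have "v s \<noteq> 0"
        using nz by (auto simp: t_eq s_def homotopy_def split: if_splits)
      ultimately have "s \<in> S" and "t = split_last_factor mid s" using v[of s] by (auto simp: S_def)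
      with t(2) show False by blast
    qed
  qed
  also have "\<dots> = (\<Sum>s\<in>CB e. (-1) ^ Suc e * v s * g (split_last_factor mid s))"
    using v by (intro sum.mono_neutral_cong_left[OF finite_chain_basis])
      (auto simp: S_def homotopy_split_last_factor mem_chain_basis)
  finally show ?thesis .
qed

lemma bar_bd_split_last_factor:
  assumes s: "(n, as, (x, y)) \<in> CB e" and bs: "length bs = e"
    and act_0: "e = 0 \<Longrightarrow> act n (x, mid y) n' = 0"
  shows "bd (split_last_factor mid (n, as, (x, y))) (n', bs, c) =
      (if bs \<noteq> [] \<and> snd (last bs) = fst c \<and> fst c = mid (snd c)
       then bd (n, as, (x, y)) (n', butlast bs, (fst (last bs), snd c)) else 0)
    + (if (n', bs, c) = (n, as, (x, y)) then (-1) ^ Suc e else 0)"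
proof -
  have as: "length as = e" using s by (simp add: mem_chain_basis)
  obtain x' m' where last: "last bs = (x', m')" by fastforce
  obtain c1 c2 where c: "c = (c1, c2)" by fastforce
  have "bd (split_last_factor mid (n, as, (x, y))) (n', bs, c) =
      (if bs \<noteq> [] \<and> c = (mid y, y) then bd (n, as, (x, mid y)) (n', butlast bs, last bs) else 0)
    + (if n' = n \<and> bs = as then (-1) ^ Suc e * mulA (x, mid y) (mid y, y) c else 0)"
    using bar_bd_snoc[of bs as n "(x, mid y)" "(mid y, y)" n' c] as bs act_0
    by (auto simp: split_last_factor_def)
  moreover have "(if bs \<noteq> [] \<and> c = (mid y, y) then bd (n, as, (x, mid y)) (n', butlast bs, last bs) else 0) =
      (if bs \<noteq> [] \<and> snd (last bs) = fst c \<and> fst c = mid (snd c)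
       then bd (n, as, (x, y)) (n', butlast bs, (fst (last bs), snd c)) else 0)"
  proof (cases "c2 = y")
    case True
    then show ?thesis
      using bar_bd_snd_eq[of n as x "mid y" n' "butlast bs" x' "mid y" y]
        bar_bd_nonzero_snd[of n as "(x, mid y)" n' "butlast bs" "(x', m')"]
      by (auto simp: last c)
  next
    case False
    then show ?thesis
      using bar_bd_nonzero_snd[of n as "(x, y)" n' "butlast bs" "(x', c2)"] by (auto simp: last c)
  qed
  moreover have "(if n' = n \<and> bs = as then (-1) ^ Suc e * mulA (x, mid y) (mid y, y) c else 0) =
      (if (n', bs, c) = (n, as, (x, y)) then (-1) ^ Suc e else 0)"
    by (auto simp: mulA_def)
  ultimately show ?thesis by simp
qed

lemma bar_boundary_homotopy:
  assumes factor: "\<And>a. a \<in> AB \<Longrightarrow> good a \<Longrightarrow> (fst a, mid (snd a)) \<in> AB \<and> (mid (snd a), snd a) \<in> AB"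
    and act_0: "\<And>a n n'. e = 0 \<Longrightarrow> a \<in> AB \<Longrightarrow> good a \<Longrightarrow> act n (fst a, mid (snd a)) n' = 0"
    and v: "\<And>s. s \<in> CB e \<Longrightarrow> \<not> good (snd (snd s)) \<Longrightarrow> v s = 0"
    and u: "u \<in> CB e"
  shows "Bd (Suc e) (homotopy mid v) u = v u - homotopy mid (Bd e v) u"
proof -
  obtain n' bs c where u_eq: "u = (n', bs, c)" by (cases u rule: prod_cases3)
  have bs: "length bs = e" using u by (simp add: u_eq mem_chain_basis)
  define C where "C = (bs \<noteq> [] \<and> snd (last bs) = fst c \<and> fst c = mid (snd c))"
  define u' where "u' = (n', butlast bs, (fst (last bs), snd c))"
  have "(-1) ^ Suc e * v s * bd (split_last_factor mid s) u =
      (if C then (-1) ^ Suc e * (v s * bd s u') else 0) + (if s = u then v s else 0)"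
    if s: "s \<in> CB e" for s
  proof (cases "good (snd (snd s))")
    case True
    obtain n as x y where s_eq: "s = (n, as, (x, y))" by (metis prod.collapse)
    have "act n (x, mid y) n'' = 0" if "e = 0" for n''
      using act_0[OF that, of "(x, y)"] s True by (simp add: s_eq mem_chain_basis)
    then have "bd (split_last_factor mid s) u =
        (if C then bd s u' else 0) + (if s = u then (-1) ^ Suc e else 0)"
      using bar_bd_split_last_factor[of n as x y e bs] s bs by (simp add: s_eq u_eq C_def u'_def)
    then show ?thesis by (simp add: algebra_simps)
  next
    case False
    then show ?thesis using v[OF s] by (cases "s = u") simp_all
  qed
  then have "Bd (Suc e) (homotopy mid v) u =
      (\<Sum>s\<in>CB e. (if C then (-1) ^ Suc e * (v s * bd s u') else 0) + (if s = u then v s else 0))"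
    unfolding bar_boundary_def using sum_homotopy[OF factor v] by simp
  also have "\<dots> = (if C then (-1) ^ Suc e * Bd e v u' else 0) + v u"
    using u by (simp add: sum.distrib sum_distrib_left bar_boundary_def finite_chain_basis)
  also have "\<dots> = v u - homotopy mid (Bd e v) u"
    using bs by (simp add: homotopy_def u_eq u'_def C_def)
  finally show ?thesis .
qed

text \<open>Here good marks the basis elements spanning an ideal I of A, and every [x,y] in I
  factors as [x, mid y] [mid y, y] with [mid y, y] \<in> I and N [x, mid y] = 0.\<close>

lemma relative_cycle_is_relative_boundary:
  assumes factor: "\<And>a. a \<in> AB \<Longrightarrow> good a \<Longrightarrow> (fst a, mid (snd a)) \<in> AB \<and> (mid (snd a), snd a) \<in> AB"
    and right_factor: "\<And>y. (mid y, y) \<in> AB \<Longrightarrow> good (mid y, y)"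
    and act_left_factor: "\<And>a n n'. a \<in> AB \<Longrightarrow> good a \<Longrightarrow> act n (fst a, mid (snd a)) n' = 0"
    and "0 < d"
    and cycle: "\<And>u. u \<in> CB (d - 1) \<Longrightarrow> \<not> good (snd (snd u)) \<Longrightarrow> Bd d v u = 0"
  shows "\<exists>w. \<forall>u\<in>CB d. \<not> good (snd (snd u)) \<longrightarrow> v u = Bd (Suc d) w u"
proof -
  obtain e where d: "d = Suc e" using \<open>0 < d\<close> gr0_implies_Suc by blast
  define z where "z = homotopy mid (Bd d v)"
  define w where "w = homotopy id (\<lambda>t. v t - z t)"
  have boundary_z: "Bd (Suc e) z t = Bd (Suc e) v t" if t: "t \<in> CB e" for t
  proof -
    have "Bd (Suc e) z t = Bd d v t - homotopy mid (Bd e (Bd d v)) t"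
      unfolding z_def d using factor act_left_factor cycle t d
      by (intro bar_boundary_homotopy[where good = good]) auto
    moreover have "homotopy mid (Bd e (Bd d v)) t = 0"
      by (rule homotopy_eq_0[OF t]) (cases e, simp_all add: bar_boundary_0 d bar_boundary_bar_boundary)
    ultimately show ?thesis using d by simp
  qed
  have boundary_w: "Bd (Suc d) w u = v u - z u" if u: "u \<in> CB d" for u
  proof -
    have "Bd (Suc d) w u = (v u - z u) - homotopy id (Bd d (\<lambda>t. v t - z t)) u"
      unfolding w_def using u d Abasis_snd_diag
      by (intro bar_boundary_homotopy[where good = "\<lambda>_. True"]) auto
    moreover have "homotopy id (Bd d (\<lambda>t. v t - z t)) u = 0"
      by (rule homotopy_eq_0[OF u]) (simp add: bar_boundary_diff boundary_z d)
    ultimately show ?thesis by simp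
  qed
  have z_not_good: "z u = 0" if "u \<in> CB d" "\<not> good (snd (snd u))" for u
    unfolding z_def
    by (rule homotopy_eq_0_not_good[where e = d and good = good]) (use that right_factor in auto)
  show ?thesis by (intro exI[of _ w] ballI impI) (simp add: boundary_w z_not_good)
qed

end

section \<open>Intervals in P \<union> {\<infinity>}\<close>

lemma le_ext_refl: "le_ext a a"
  by (cases a) (auto simp: le_ext_def)

lemma le_ext_trans: "le_ext a b \<Longrightarrow> le_ext b c \<Longrightarrow> le_ext a c"
  by (cases a; cases b; cases c) (auto simp: le_ext_def)

lemma le_Int_refl: "le_Int x x"
  by (simp add: le_Int_def le_ext_refl)

lemma le_Int_trans: "le_Int x y \<Longrightarrow> le_Int y z \<Longrightarrow> le_Int x z"
  by (auto simp: le_Int_def intro: le_ext_trans)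

lemma finite_IntP: "finite P \<Longrightarrow> finite (IntP P)"
  by (rule finite_subset[of _ "ExtP P \<times> ExtP P"]) (auto simp: IntP_def ExtP_def)

lemma bar_complex_IntP:
  "finite P \<Longrightarrow> is_rep (IntP P) le_Int dimN Nmap \<Longrightarrow> bar_complex (IntP P) le_Int dimN Nmap"
  by unfold_locales (auto simp: finite_IntP le_Int_refl intro: le_Int_trans)

text \<open>The basis elements [x,y] of the ideal (e): those with x \<le> (c,c) \<le> y for some c.\<close>

definition through_diagonal :: "('p::order option \<times> 'p option) \<times> ('p option \<times> 'p option) \<Rightarrow> bool" where
  "through_diagonal b \<longleftrightarrow> le_ext (snd (fst b)) (fst (snd b))"

definition diag_below :: "'p option \<times> 'p option \<Rightarrow> 'p option \<times> 'p option" where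
  "diag_below y = (fst y, fst y)"

lemma basis_vec_mult_idem_sum_diagP:
  assumes "finite P" and b1: "b1 \<in> Abasis (IntP P) le_Int"
  shows "alg_mult (IntP P) le_Int (basis_vec b1) (idem_sum (diagP P)) t =
    (if fst (snd b1) = snd (snd b1) \<and> t = b1 then 1 else 0)"
proof -
  have fin: "finite (Abasis (IntP P) le_Int)" using \<open>finite P\<close> by (simp add: finite_Abasis finite_IntP)
  have "snd b1 \<in> IntP P" using b1 by (auto simp: Abasis_def)
  then have diag: "(snd b1, snd b1) \<in> Abasis (IntP P) le_Int"
    and E: "idem_sum (diagP P) (snd b1, snd b1) = (if fst (snd b1) = snd (snd b1) then 1 else 0)"
    by (auto simp: Abasis_def le_Int_refl idem_sum_def diagP_def IntP_def)
  have "alg_mult (IntP P) le_Int (basis_vec b1) (idem_sum (diagP P)) t =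
      (\<Sum>b'\<in>Abasis (IntP P) le_Int. idem_sum (diagP P) b' * mulA b1 b' t)"
    using assms by (simp add: alg_mult_basis_vec_left finite_IntP)
  also have "\<dots> = idem_sum (diagP P) (snd b1, snd b1) * mulA b1 (snd b1, snd b1) t"
  proof (subst sum_eq_single[OF fin])
    fix b' assume "b' \<noteq> (snd b1, snd b1)"
    then show "idem_sum (diagP P) b' * mulA b1 b' t = 0"
      by (cases b1) (auto simp: mulA_def idem_sum_def diagP_def)
  qed (simp add: diag)
  also have "\<dots> = (if fst (snd b1) = snd (snd b1) \<and> t = b1 then 1 else 0)"
    by (auto simp: E mulA_def)
  finally show ?thesis .
qed

lemma idem_sum_diagP_sandwich:
  assumes "finite P" and b1: "b1 \<in> Abasis (IntP P) le_Int" and b2: "b2 \<in> Abasis (IntP P) le_Int"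
  shows "alg_mult (IntP P) le_Int (alg_mult (IntP P) le_Int (basis_vec b1) (idem_sum (diagP P))) (basis_vec b2) b =
    (if fst (snd b1) = snd (snd b1) then mulA b1 b2 b else 0)"
  using assms
  by (simp add: alg_mult_basis_vec_right finite_IntP basis_vec_mult_idem_sum_diagP finite_Abasis
      if_distrib[of "\<lambda>x. x * _"] sum.delta' cong: if_cong)

lemma through_diagonal_mulA:
  assumes "b1 \<in> Abasis (IntP P) le_Int" "b2 \<in> Abasis (IntP P) le_Int"
    and "fst (snd b1) = snd (snd b1)" and "mulA b1 b2 b \<noteq> (0::'k::field)"
  shows "through_diagonal b"
proof -
  have "snd b1 = fst b2" and b: "b = (fst b1, snd b2)"
    using assms(4) by (auto simp: mulA_def split: if_splits)
  moreover have "le_ext (snd (fst b1)) (snd (snd b1))" "le_ext (fst (fst b2)) (fst (snd b2))"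
    using assms(1,2) by (auto simp: Abasis_def le_Int_def)
  ultimately show ?thesis
    using assms(3) by (auto simp: through_diagonal_def intro: le_ext_trans)
qed

lemma gen_ideal_diag_vanishes:
  assumes "finite P" and f: "f \<in> gen_ideal (IntP P) le_Int (idem_sum (diagP P))"
    and b: "b \<in> Abasis (IntP P) le_Int" and not_through: "\<not> through_diagonal b"
  shows "f b = 0"
proof -
  let ?AB = "Abasis (IntP P) le_Int"
  obtain c where c: "f b = (\<Sum>b1\<in>?AB. \<Sum>b2\<in>?AB.
      c b1 b2 * (if fst (snd b1) = snd (snd b1) then mulA b1 b2 b else 0))"
    using f b by (auto simp: gen_ideal_def idem_sum_diagP_sandwich[OF assms(1)] cong: sum.cong)
  have "c b1 b2 * (if fst (snd b1) = snd (snd b1) then mulA b1 b2 b else 0) = 0"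
    if "b1 \<in> ?AB" "b2 \<in> ?AB" for b1 b2
    using through_diagonal_mulA[OF that, of b] not_through by auto
  then show "f b = 0" unfolding c by (intro sum.neutral ballI)
qed

text \<open>Coefficients exhibiting f as an element of (e): the value of f at [x,y] is put on
  [x, m] e [m, y] with m = diag_below y.\<close>

definition diag_coeffs ::
    "(('p::order option \<times> 'p option) \<times> ('p option \<times> 'p option) \<Rightarrow> 'k::field)
     \<Rightarrow> ('p option \<times> 'p option) \<times> ('p option \<times> 'p option)
     \<Rightarrow> ('p option \<times> 'p option) \<times> ('p option \<times> 'p option) \<Rightarrow> 'k" where
  "diag_coeffs f b1 b2 =
     (if snd b1 = diag_below (snd b2) \<and> fst b2 = diag_below (snd b2) then f (fst b1, snd b2) else 0)"

lemma sum_diag_coeffs: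
  assumes "finite P" and b: "b \<in> Abasis (IntP P) le_Int"
    and f: "\<not> through_diagonal b \<Longrightarrow> f b = 0"
  shows "(\<Sum>b1\<in>Abasis (IntP P) le_Int. \<Sum>b2\<in>Abasis (IntP P) le_Int.
      diag_coeffs f b1 b2 * (if fst (snd b1) = snd (snd b1) then mulA b1 b2 b else 0)) = f b"
  (is "(\<Sum>b1\<in>?AB. \<Sum>b2\<in>?AB. ?F b1 b2) = _")
proof -
  define B1 where "B1 = (fst b, diag_below (snd b))"
  define B2 where "B2 = (diag_below (snd b), snd b)"
  have "(\<Sum>b1\<in>?AB. \<Sum>b2\<in>?AB. ?F b1 b2) =
      (if (B1, B2) \<in> ?AB \<times> ?AB then diag_coeffs f B1 B2 * mulA B1 B2 b else 0)"
    unfolding sum.cartesian_product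
  proof (subst sum_eq_single[where a = "(B1, B2)"])
    show "finite (?AB \<times> ?AB)" using assms by (simp add: finite_Abasis finite_IntP)
  next
    fix p assume "p \<noteq> (B1, B2)"
    then show "(case p of (b1, b2) \<Rightarrow> ?F b1 b2) = 0"
      by (cases p) (auto simp: diag_coeffs_def mulA_def B1_def B2_def diag_below_def split: if_splits)
  qed (simp add: B1_def diag_below_def)
  also have "\<dots> = f b"
  proof (cases "through_diagonal b")
    case True
    then have "(B1, B2) \<in> ?AB \<times> ?AB"
      using b by (cases b) (auto simp: B1_def B2_def diag_below_def through_diagonal_def Abasis_def
        IntP_def le_Int_def le_ext_refl intro: le_ext_trans)
    then show ?thesis by (simp add: diag_coeffs_def mulA_def B1_def B2_def diag_below_def)
  next
    case False
    then show ?thesis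
      using f through_diagonal_mulA[of B1 P B2 b] by (auto simp: B1_def B2_def diag_below_def)
  qed
  finally show ?thesis .
qed

lemma mem_gen_ideal_diag_iff:
  fixes f :: "('p::order option \<times> 'p option) \<times> ('p option \<times> 'p option) \<Rightarrow> 'k::field"
  assumes "finite P"
  shows "f \<in> gen_ideal (IntP P) le_Int (idem_sum (diagP P)) \<longleftrightarrow>
    (\<forall>b\<in>Abasis (IntP P) le_Int. \<not> through_diagonal b \<longrightarrow> f b = 0)"
proof
  show "\<forall>b\<in>Abasis (IntP P) le_Int. \<not> through_diagonal b \<longrightarrow> f b = 0"
    if "f \<in> gen_ideal (IntP P) le_Int (idem_sum (diagP P))"
    using gen_ideal_diag_vanishes[OF assms that] by blast
next
  assume "\<forall>b\<in>Abasis (IntP P) le_Int. \<not> through_diagonal b \<longrightarrow> f b = 0"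
  then show "f \<in> gen_ideal (IntP P) le_Int (idem_sum (diagP P))"
    unfolding gen_ideal_def
    by (intro CollectI exI[of _ "diag_coeffs f"] ballI)
      (simp add: idem_sum_diagP_sandwich[OF assms] sum_diag_coeffs[OF assms] cong: sum.cong)
qed

lemma in_sub_diag_ideal_iff:
  assumes "finite P"
  shows "in_sub (IntP P) le_Int dimN e (gen_ideal (IntP P) le_Int (idem_sum (diagP P))) f \<longleftrightarrow>
    (\<forall>u\<in>chain_basis (IntP P) le_Int dimN e. \<not> through_diagonal (snd (snd u)) \<longrightarrow> f u = 0)"
  unfolding in_sub_def mem_gen_ideal_diag_iff[OF assms] chain_basis_def by auto

lemma through_diagonal_factor:
  assumes "a \<in> Abasis (IntP P) le_Int" and "through_diagonal a"
  shows "(fst a, diag_below (snd a)) \<in> Abasis (IntP P) le_Int \<and>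
    (diag_below (snd a), snd a) \<in> Abasis (IntP P) le_Int"
  using assms
  by (auto simp: Abasis_def IntP_def le_Int_def diag_below_def through_diagonal_def le_ext_refl
      intro: le_ext_trans)

lemma through_diagonal_diag_below: "through_diagonal (diag_below y, y)"
  by (simp add: through_diagonal_def diag_below_def le_ext_refl)

lemma actN_diag_below:
  assumes vanish: "\<forall>a\<in>ExtP P. \<forall>b\<in>ExtP P. \<forall>c\<in>ExtP P. \<forall>d\<in>ExtP P.
      le_ext a b \<and> le_ext b c \<and> le_ext c d \<longrightarrow> (\<forall>i<dimN (a, b). \<forall>j<dimN (c, d). Nmap (a, b) (c, d) j i = 0)"
    and "a \<in> Abasis (IntP P) le_Int" and "through_diagonal a"
  shows "actN dimN Nmap n (fst a, diag_below (snd a)) n' = 0"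
proof -
  obtain x1 x2 y1 y2 where a: "a = ((x1, x2), (y1, y2))" by (metis prod.collapse)
  have "x1 \<in> ExtP P" "x2 \<in> ExtP P" "y1 \<in> ExtP P" "le_ext x1 x2" "le_ext x2 y1"
    using assms(2,3) by (auto simp: a Abasis_def IntP_def through_diagonal_def)
  with vanish have "\<forall>i<dimN (x1, x2). \<forall>j<dimN (y1, y1). Nmap (x1, x2) (y1, y1) j i = 0"
    using le_ext_refl by blast
  then show ?thesis by (auto simp: actN_def a diag_below_def)
qed

theorem propositionA7:
  fixes P :: "'p::order set"
    and dimN :: "'p option \<times> 'p option \<Rightarrow> nat"
    and Nmap :: "'p option \<times> 'p option \<Rightarrow> 'p option \<times> 'p option \<Rightarrow> nat \<Rightarrow> nat \<Rightarrow> 'k::field"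
    and d :: nat
  assumes "finite P"
    and "is_rep (IntP P) le_Int dimN Nmap"
    and "\<forall>a\<in>ExtP P. \<forall>b\<in>ExtP P. \<forall>c\<in>ExtP P. \<forall>d'\<in>ExtP P.
           le_ext a b \<and> le_ext b c \<and> le_ext c d' \<longrightarrow>
           (\<forall>i<dimN (a, b). \<forall>j<dimN (c, d'). Nmap (a, b) (c, d') j i = 0)"
    and "d > 0"
  shows "Tor_quot_vanishes (IntP P) le_Int dimN Nmap (idem_sum (diagP P)) d"
proof -
  interpret bar_complex "IntP P" le_Int dimN Nmap
    using assms(1,2) by (rule bar_complex_IntP)
  have "\<exists>w. \<forall>u\<in>CB d. \<not> through_diagonal (snd (snd u)) \<longrightarrow> v u = Bd (Suc d) w u"
    if "\<forall>u\<in>CB (d - 1). \<not> through_diagonal (snd (snd u)) \<longrightarrow> Bd d v u = 0" for v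
    using relative_cycle_is_relative_boundary[of through_diagonal diag_below d v]
      through_diagonal_factor through_diagonal_diag_below actN_diag_below[OF assms(3)] assms(4) that
    by blast
  then show ?thesis
    unfolding Tor_quot_vanishes_def Let_def in_sub_diag_ideal_iff[OF assms(1)] by simp
qed

end
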